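(* Let $A=\{z\in\mathbb{C}:\operatorname{Re}z>0\}$. Let $Q_0$ be a function holomorphic in $A$ and $Q_1$ a polynomial in one complex variable. If $Q_0(w)+vQ_1(w)\ne0$ for all $v,w\in A$, then either $S(z)=Q_0(z)+Q_1'(z)\ne0$ for all $z\in A$, or $S\equiv0$ on $A$. *)

theory Defs
  imports "HOL-Complex_Analysis.Complex_Analysis" "HOL-Computational_Algebra.Polynomial"
begin

definition right_half_plane :: "complex set" where
  "right_half_plane = {z. Re z > 0}"

end

theory Submission
  imports Defs "HOL-Computational_Algebra.Fundamental_Theorem_Algebra"
begin

text \<open>
  Taking \<open>v\<close> on the positive real axis, the hypothesis says that near any zero \<open>r\<close> of \<open>Q\<^sub>1\<close>
  in \<open>A\<close> the holomorphic function \<open>-Q\<^sub>1/Q\<^sub>0\<close> vanishes at \<open>r\<close> but omits all positive reals;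
  by the open mapping theorem this forces \<open>Q\<^sub>1 = 0\<close>. So if \<open>Q\<^sub>1\<close> is non-constant its zeros lie
  in the closed left half-plane, whence \<open>Re (Q\<^sub>1'/Q\<^sub>1) = \<Sum> Re (1/(z - r)) > 0\<close> on \<open>A\<close>, while
  taking \<open>v = -Q\<^sub>0/Q\<^sub>1\<close> shows \<open>Re (Q\<^sub>0/Q\<^sub>1) \<ge> 0\<close>; hence \<open>S/Q\<^sub>1\<close> has positive real part.
  If \<open>Q\<^sub>1\<close> is a nonzero constant, \<open>S = Q\<^sub>0\<close> omits a ray from the origin, so again by the open
  mapping theorem it is either zero-free or identically zero.
\<close>

lemma open_right_half_plane: "open right_half_plane"
  unfolding right_half_plane_def using open_halfspace_Re_gt[of 0] by simp

lemma connected_right_half_plane: "connected right_half_plane"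
  unfolding right_half_plane_def
  by (rule convex_connected) (use convex_halfspace_Re_gt[of 0] in simp)

lemma zero_free_or_zero_if_omits_ray:
  assumes holf: "f holomorphic_on S" and "open S" "connected S" "c \<noteq> 0"
    and omits: "\<And>t w. t > 0 \<Longrightarrow> w \<in> S \<Longrightarrow> f w \<noteq> of_real t * c"
  shows "(\<forall>z\<in>S. f z \<noteq> 0) \<or> (\<forall>z\<in>S. f z = 0)"
proof (cases "f constant_on S")
  case True
  then show ?thesis
    unfolding constant_on_def by auto
next
  case nonconst: False
  have "f z \<noteq> 0" if "z \<in> S" for z
  proof
    assume "f z = 0"
    with \<open>z \<in> S\<close> have "0 \<in> f ` S"
      by force
    moreover have "open (f ` S)"
      using open_mapping_thm[OF holf \<open>open S\<close> \<open>connected S\<close> \<open>open S\<close> order_refl nonconst] .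
    ultimately obtain e where "e > 0" and ball: "ball 0 e \<subseteq> f ` S"
      using open_contains_ball by blast
    define t where "t = e / (2 * norm c)"
    have "t > 0"
      using \<open>e > 0\<close> \<open>c \<noteq> 0\<close> by (simp add: t_def)
    have "norm (of_real t * c) = e / 2"
      using \<open>t > 0\<close> \<open>c \<noteq> 0\<close> by (simp add: norm_mult) (simp add: t_def)
    then have "of_real t * c \<in> ball 0 e"
      using \<open>e > 0\<close> by simp
    then obtain w where "w \<in> S" "f w = of_real t * c"
      using ball by (metis imageE subsetD)
    then show False
      using omits[OF \<open>t > 0\<close>] by blast
  qed
  then show ?thesis
    by blast
qed

lemma Re_poly_logderiv_pos:
  fixes p :: "complex poly"
  assumes "degree p > 0" and "\<And>r. poly p r = 0 \<Longrightarrow> Re r < Re z"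
  shows "Re (poly (pderiv p) z / poly p z) > 0"
  using assms
proof (induction "degree p" arbitrary: p)
  case 0
  then show ?case by simp
next
  case (Suc n)
  have "\<not> constant (poly p)"
    using Suc.prems(1) constant_degree[of p] by simp
  then obtain r where r: "poly p r = 0"
    using fundamental_theorem_of_algebra by blast
  then obtain q where p: "p = [:-r, 1:] * q"
    by (metis dvdE poly_eq_0_iff_dvd)
  then have "q \<noteq> 0"
    using Suc.prems(1) by auto
  then have "degree p = 1 + degree q"
    unfolding p by (subst degree_mult_eq) auto
  then have deg_q: "degree q = n"
    using Suc.hyps(2) by simp
  have roots_q: "Re s < Re z" if "poly q s = 0" for s
    using Suc.prems(2)[of s] that by (simp add: p)
  have "pderiv p = q + [:-r, 1:] * pderiv q"
    unfolding p pderiv_mult by (simp add: pderiv_pCons add.commute)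
  then have pderiv_p_z: "poly (pderiv p) z = poly q z + (z - r) * poly (pderiv q) z"
    by (simp only: poly_add poly_mult) simp
  have p_z: "poly p z = (z - r) * poly q z"
    by (simp add: p algebra_simps)
  have "z - r \<noteq> 0" "poly q z \<noteq> 0"
    using Suc.prems(2)[OF r] roots_q by auto
  then have logderiv:
    "poly (pderiv p) z / poly p z = 1 / (z - r) + poly (pderiv q) z / poly q z"
    unfolding pderiv_p_z p_z by (simp add: field_simps)
  have "Re (1 / (z - r)) > 0"
    using Suc.prems(2)[OF r] by (simp add: Re_complex_div_gt_0)
  moreover have "Re (poly (pderiv q) z / poly q z) \<ge> 0"
  proof (cases "n = 0")
    case True
    then have "pderiv q = 0"
      using deg_q by (simp add: pderiv_eq_0_iff)
    then show ?thesis
      by simp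
  next
    case False
    then show ?thesis
      using Suc.hyps(1)[OF deg_q[symmetric] _ roots_q] deg_q by fastforce
  qed
  ultimately show ?case
    unfolding logderiv by simp
qed

lemma poly_roots_Re_nonpos:
  fixes Q0 :: "complex \<Rightarrow> complex" and Q1 :: "complex poly"
  assumes holQ0: "Q0 holomorphic_on right_half_plane" and "Q1 \<noteq> 0"
    and nonzero: "\<And>t w. t > 0 \<Longrightarrow> w \<in> right_half_plane \<Longrightarrow> Q0 w + of_real t * poly Q1 w \<noteq> 0"
    and root: "poly Q1 r = 0"
  shows "Re r \<le> 0"
proof (rule ccontr)
  assume "\<not> Re r \<le> 0"
  then have rA: "r \<in> right_half_plane"
    by (simp add: right_half_plane_def)
  have "Q0 r \<noteq> 0"
    using nonzero[of 1 r] rA root by simp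
  moreover have "isCont Q0 r"
    using holQ0 rA open_right_half_plane
    by (meson continuous_on_eq_continuous_at holomorphic_on_imp_continuous_on)
  ultimately obtain d1 where "d1 > 0" and d1: "\<And>w. dist r w < d1 \<Longrightarrow> Q0 w \<noteq> 0"
    using continuous_at_avoid by blast
  obtain d2 where "d2 > 0" and d2: "ball r d2 \<subseteq> right_half_plane"
    using open_right_half_plane rA open_contains_ball by blast
  define B where "B = ball r (min d1 d2)"
  have "r \<in> B"
    using \<open>d1 > 0\<close> \<open>d2 > 0\<close> by (simp add: B_def)
  have BA: "B \<subseteq> right_half_plane"
    using d2 by (auto simp: B_def)
  have Q0_B: "Q0 w \<noteq> 0" if "w \<in> B" for w
    using d1 that by (simp add: B_def)
  define h where "h w = - poly Q1 w / Q0 w" for w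
  have "h holomorphic_on B"
    unfolding h_def using Q0_B
    by (intro holomorphic_intros holomorphic_on_subset[OF holQ0 BA]) auto
  moreover have "h w \<noteq> of_real t * 1" if "t > 0" "w \<in> B" for t w
  proof
    assume "h w = of_real t * 1"
    then have "poly Q1 w = - of_real t * Q0 w"
      using Q0_B[OF \<open>w \<in> B\<close>] by (simp add: h_def field_simps) (metis minus_minus)
    then have "Q0 w + of_real (1 / t) * poly Q1 w = 0"
      using \<open>t > 0\<close> by simp
    then show False
      using nonzero[of "1 / t" w] that BA by auto
  qed
  moreover have "h r = 0"
    by (simp add: h_def root)
  ultimately have "\<forall>w\<in>B. h w = 0"
    using zero_free_or_zero_if_omits_ray[of h B 1] \<open>r \<in> B\<close> by (auto simp: B_def)
  then have "B \<subseteq> {x. poly Q1 x = 0}"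
    using Q0_B by (auto simp: h_def)
  moreover have "infinite B"
    using finite_imp_not_open[of B] \<open>r \<in> B\<close> by (auto simp: B_def)
  ultimately show False
    using poly_roots_finite[OF \<open>Q1 \<noteq> 0\<close>] finite_subset by blast
qed

theorem lemma2p2:
  fixes Q0 :: "complex \<Rightarrow> complex" and Q1 :: "complex poly"
  assumes "Q0 holomorphic_on right_half_plane"
    and "\<forall>v\<in>right_half_plane. \<forall>w\<in>right_half_plane. Q0 w + v * poly Q1 w \<noteq> 0"
  shows "(\<forall>z\<in>right_half_plane. Q0 z + poly (pderiv Q1) z \<noteq> 0)
       \<or> (\<forall>z\<in>right_half_plane. Q0 z + poly (pderiv Q1) z = 0)"
proof -
  have inA: "z \<in> right_half_plane \<longleftrightarrow> Re z > 0" for z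
    by (simp add: right_half_plane_def)
  show ?thesis
  proof (cases "degree Q1 = 0")
    case True
    then obtain c where c: "Q1 = [:c:]"
      using degree_eq_zeroE by blast
    show ?thesis
    proof (cases "c = 0")
      case True
      then show ?thesis
        using assms(2) inA[of 1] c by auto
    next
      case False
      have "Q0 w \<noteq> of_real t * - c" if "t > 0" "w \<in> right_half_plane" for t w
      proof -
        have "Q0 w + of_real t * c \<noteq> 0"
          using assms(2) that inA[of "of_real t"] c by simp
        then show ?thesis
          by (simp add: add_eq_0_iff2)
      qed
      then show ?thesis
        using zero_free_or_zero_if_omits_ray[OF assms(1) open_right_half_plane
            connected_right_half_plane, of "-c"] False c by auto
    qed
  next
    case False
    have roots: "Re r < Re z" if "poly Q1 r = 0" "z \<in> right_half_plane" for r z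
      using poly_roots_Re_nonpos[OF assms(1), of Q1 r] assms(2) False that inA by fastforce
    have "Q0 z + poly (pderiv Q1) z \<noteq> 0" if "z \<in> right_half_plane" for z
    proof -
      have "poly Q1 z \<noteq> 0"
        using roots[of z z] that by auto
      have "Re (Q0 z / poly Q1 z) \<ge> 0"
        using assms(2) that inA[of "- (Q0 z / poly Q1 z)"] \<open>poly Q1 z \<noteq> 0\<close>
        by (force simp: field_simps)
      moreover have "Re (poly (pderiv Q1) z / poly Q1 z) > 0"
        using Re_poly_logderiv_pos[of Q1 z] False roots that by blast
      ultimately have "Re ((Q0 z + poly (pderiv Q1) z) / poly Q1 z) > 0"
        by (simp add: add_divide_distrib)
      then show ?thesis
        by auto
    qed
    then show ?thesis
      by blast
  qed
qed

end
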